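(* Let $n\geq 3$ and let $\rho>0$, $q>0$ be constants. Let $(m,\mathbf{U})$ lie in the interior of the convex hull $K_{\rho,q}^{\mathrm{co}}$. Then there exist $\bar m\in\mathbb{R}^n$ and $\bar{\mathbf{U}}\in\mathbb{S}_0^{n\times n}$ such that the closed segment with endpoints $(m-\bar m,\mathbf{U}-\bar{\mathbf{U}})$ and $(m+\bar m,\mathbf{U}+\bar{\mathbf{U}})$ is contained in the interior of $K_{\rho,q}^{\mathrm{co}}$ and is parallel to $$\Big(a,\frac{a\otimes a}{\rho}\Big)-\Big(b,\frac{b\otimes b}{\rho}\Big)$$ for some $a,b\in\mathbb{R}^n$ with $|a|=|b|=\sqrt{n\rho q}$. Moreover, $$|\bar m|\geq\frac{C}{\sqrt{n\rho q}}\big(n\rho q-|m|^2\big),$$ where $C>0$ is a constant depending only on $n$.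
   Context: $\mathbb{S}_0^{n\times n}$ denotes the real symmetric trace-free $n\times n$ matrices. For constants $\rho,q>0$, $$K_{\rho,q}=\Big\{(m,\mathbf{U})\in\mathbb{R}^n\times\mathbb{S}_0^{n\times n}:\frac{m\otimes m}{\rho}-\mathbf{U}=q\mathbf{I}_n\Big\}$$ (equivalently $|m|=\sqrt{n\rho q}$ and $\mathbf{U}=\frac{m\otimes m}{\rho}-\frac{|m|^2}{n\rho}\mathbf{I}_n$), and $K_{\rho,q}^{\mathrm{co}}$ is its convex hull in $\mathbb{R}^n\times\mathbb{S}_0^{n\times n}$. *)

theory Defs
  imports "HOL-Analysis.Analysis"
begin

definition outer :: "real^'n \<Rightarrow> real^'n \<Rightarrow> real^'n^'n" where
  "outer a b = (\<chi> i j. a $ i * b $ j)"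

definition symm0 :: "(real^'n^'n) set" where
  "symm0 = {U. transpose U = U \<and> trace U = 0}"

definition Space :: "((real^'n) \<times> (real^'n^'n)) set" where
  "Space = UNIV \<times> symm0"

definition Kset :: "real \<Rightarrow> real \<Rightarrow> ((real^'n) \<times> (real^'n^'n)) set" where
  "Kset \<rho> q = {(m, U). U \<in> symm0 \<and> (1/\<rho>) *\<^sub>R outer m m - U = q *\<^sub>R mat 1}"

definition intKco :: "real \<Rightarrow> real \<Rightarrow> ((real^'n) \<times> (real^'n^'n)) set" where
  "intKco \<rho> q = (top_of_set Space) interior_of (convex hull (Kset \<rho> q))"

end

theory Submission
  imports Defs
begin

(*
  By Caratheodory, (m, U) is a convex combination of at most N = dim + 1 points (a\<^sub>i, A\<^sub>i) of K
  with weights \<lambda>\<^sub>i; let b be the point of largest weight. Since |a\<^sub>i| = R = sqrt (n\<rho>q),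
  R\<^sup>2 - |m|\<^sup>2 = (b - m)\<bullet>(b + m) \<le> 2R \<Sum>\<^sub>i \<lambda>\<^sub>i |a\<^sub>i - b|, so some a = a\<^sub>j satisfies
  \<lambda>\<^sub>j |a - b| \<ge> (R\<^sup>2 - |m|\<^sup>2) / (2NR). Shifting a weight of at most \<lambda>\<^sub>j between these two points
  stays in the convex hull, so (m, U) \<plusminus> \<lambda>\<^sub>j ((a, A\<^sub>j) - (b, A\<^sub>b)) lie in it, and as (m, U) is a
  relative interior point, the middle half of this chord lies in the relative interior.
  Hence C = 1 / (4N).
*)

lemma finite_obtain_arg_max:
  fixes f :: "'a \<Rightarrow> 'b::linorder"
  assumes "finite A" "A \<noteq> {}"
  obtains x where "x \<in> A" "\<And>y. y \<in> A \<Longrightarrow> f y \<le> f x"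
proof -
  have "Max (f ` A) \<in> f ` A" using assms by simp
  then obtain x where "x \<in> A" "f x = Max (f ` A)" by auto
  with assms(1) show ?thesis using that by simp
qed

lemma interior_of_affine_convex_shrink:
  fixes S C :: "'a::real_normed_vector set"
  assumes "affine S" "convex C" "C \<subseteq> S"
    and z: "z \<in> top_of_set S interior_of C" and y: "y \<in> C" and "0 \<le> \<theta>" "\<theta> < 1"
  shows "(1 - \<theta>) *\<^sub>R z + \<theta> *\<^sub>R y \<in> top_of_set S interior_of C"
proof -
  define f where "f = (\<lambda>x. (1 - \<theta>) *\<^sub>R x + \<theta> *\<^sub>R y)"
  define g where "g = (\<lambda>x. (1 / (1 - \<theta>)) *\<^sub>R x + (- \<theta> / (1 - \<theta>)) *\<^sub>R y)"
  have "y \<in> S" using y assms(3) by blast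
  have "homeomorphism S S f g"
  proof
    show "f ` S \<subseteq> S"
      using mem_affine[OF \<open>affine S\<close> _ \<open>y \<in> S\<close>, of _ "1 - \<theta>" \<theta>] by (auto simp: f_def)
    show "g ` S \<subseteq> S"
      using mem_affine[OF \<open>affine S\<close> _ \<open>y \<in> S\<close>, of _ "1 / (1 - \<theta>)" "- \<theta> / (1 - \<theta>)"] \<open>\<theta> < 1\<close>
      by (auto simp: g_def field_simps)
    show "g (f x) = x" "f (g x) = x" for x
      using \<open>\<theta> < 1\<close> by (simp_all add: f_def g_def scaleR_add_right scaleR_diff_right)
    show "continuous_on S f" "continuous_on S g"
      unfolding f_def g_def by (intro continuous_intros)+
  qed
  then have "openin (top_of_set S) (f ` (top_of_set S interior_of C))"
    by (rule homeomorphism_imp_open_map) simp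
  moreover have "f ` (top_of_set S interior_of C) \<subseteq> C"
    using interior_of_subset[of "top_of_set S" C] y \<open>convex C\<close> \<open>0 \<le> \<theta>\<close> \<open>\<theta> < 1\<close>
    by (auto simp: f_def intro!: convexD)
  ultimately have "f ` (top_of_set S interior_of C) \<subseteq> top_of_set S interior_of C"
    by (rule interior_of_maximal[rotated])
  then show ?thesis using z by (auto simp: f_def)
qed

lemma closed_segment_subset_interior_of:
  fixes S C :: "'a::real_normed_vector set"
  assumes "affine S" "convex C" "C \<subseteq> S" "z \<in> top_of_set S interior_of C"
    and "z + d \<in> C" "z - d \<in> C"
  shows "closed_segment (z - (1/2) *\<^sub>R d) (z + (1/2) *\<^sub>R d) \<subseteq> top_of_set S interior_of C"
proof
  fix p assume "p \<in> closed_segment (z - (1/2) *\<^sub>R d) (z + (1/2) *\<^sub>R d)"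
  then obtain t where t: "0 \<le> t" "t \<le> 1" "p = (1 - t) *\<^sub>R (z - (1/2) *\<^sub>R d) + t *\<^sub>R (z + (1/2) *\<^sub>R d)"
    by (auto simp: closed_segment_def)
  define s where "s = t - 1/2"
  have s: "\<bar>s\<bar> \<le> 1/2" "p = z + s *\<^sub>R d"
    using t(1,2) unfolding s_def t(3)
    by (auto simp: field_simps simp flip: scaleR_add_left)
  show "p \<in> top_of_set S interior_of C"
  proof (cases "s \<ge> 0")
    case True
    have "p = (1 - s) *\<^sub>R z + s *\<^sub>R (z + d)"
      using s(2) by (simp add: algebra_simps)
    then show ?thesis
      using interior_of_affine_convex_shrink[OF assms(1-5), of s] True s(1) by simp
  next
    case False
    have "p = (1 - (- s)) *\<^sub>R z + (- s) *\<^sub>R (z - d)"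
      using s(2) by (simp add: algebra_simps)
    then show ?thesis
      using interior_of_affine_convex_shrink[OF assms(1-4,6), of "- s"] False s(1) by simp
  qed
qed

lemma convex_hull_transfer_weight:
  fixes S :: "'a::real_vector set"
  assumes "finite S" "\<forall>y\<in>S. 0 \<le> u y" "sum u S = 1"
    and "x \<in> S" "x' \<in> S" "- u x \<le> \<mu>" "\<mu> \<le> u x'"
  shows "(\<Sum>y\<in>S. u y *\<^sub>R y) + \<mu> *\<^sub>R (x - x') \<in> convex hull S"
proof -
  define v where "v y = u y + (if y = x then \<mu> else 0) - (if y = x' then \<mu> else 0)" for y
  have "\<forall>y\<in>S. 0 \<le> v y" "sum v S = 1"
    using assms by (auto simp: v_def sum.distrib sum_subtractf)
  moreover have "(\<Sum>y\<in>S. v y *\<^sub>R y) = (\<Sum>y\<in>S. u y *\<^sub>R y) + \<mu> *\<^sub>R (x - x')"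
    using assms(1,4,5)
    by (simp add: v_def scaleR_add_left scaleR_diff_left sum.distrib sum_subtractf
        if_distrib[of "\<lambda>c. c *\<^sub>R _"] scaleR_diff_right cong: if_cong)
  ultimately show ?thesis
    unfolding convex_hull_finite[OF assms(1)] by blast
qed

lemma convex_combination_sphere_far_point:
  fixes p :: "'i \<Rightarrow> 'a::real_inner"
  assumes "finite I" "\<forall>i\<in>I. 0 \<le> u i" "sum u I = 1"
    and "\<forall>i\<in>I. norm (p i) = R" "norm b = R"
  shows "\<exists>i\<in>I. R\<^sup>2 - (norm (\<Sum>i\<in>I. u i *\<^sub>R p i))\<^sup>2 \<le> 2 * R * real (card I) * (u i * norm (p i - b))"
proof -
  define m where "m = (\<Sum>i\<in>I. u i *\<^sub>R p i)"
  define g where "g i = u i * norm (p i - b)" for i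
  have "I \<noteq> {}" using assms(3) by auto
  then obtain j where j: "j \<in> I" "\<And>i. i \<in> I \<Longrightarrow> g i \<le> g j"
    using finite_obtain_arg_max[OF assms(1)] by blast
  have "b - m = (\<Sum>i\<in>I. u i *\<^sub>R (b - p i))"
    using assms(3) by (simp add: m_def scaleR_diff_right sum_subtractf flip: scaleR_sum_left)
  then have "norm (b - m) \<le> (\<Sum>i\<in>I. norm (u i *\<^sub>R (b - p i)))"
    by (metis norm_sum)
  also have "\<dots> = sum g I"
    using assms(2) by (intro sum.cong) (auto simp: g_def norm_minus_commute)
  also have "\<dots> \<le> real (card I) * g j"
    using j(2) by (rule sum_bounded_above)
  finally have bm: "norm (b - m) \<le> real (card I) * g j" .
  have "norm m \<le> (\<Sum>i\<in>I. norm (u i *\<^sub>R p i))"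
    unfolding m_def by (rule norm_sum)
  also have "\<dots> = (\<Sum>i\<in>I. u i * R)"
    using assms(2,4) by (intro sum.cong) auto
  also have "\<dots> = R"
    using assms(3) by (simp flip: sum_distrib_right)
  finally have "norm m \<le> R" .
  have "b \<bullet> b = R\<^sup>2" using assms(5) by (metis power2_norm_eq_inner)
  then have "R\<^sup>2 - (norm m)\<^sup>2 = (b - m) \<bullet> (b + m)"
    by (simp add: power2_norm_eq_inner inner_diff_right inner_diff_left inner_add_right inner_commute)
  also have "\<dots> \<le> norm (b - m) * norm (b + m)"
    by (rule Cauchy_Schwarz_ineq2[THEN abs_le_D1])
  also have "\<dots> \<le> real (card I) * g j * (2 * R)"
    using bm order_trans[OF norm_ge_zero bm] norm_triangle_ineq[of b m] \<open>norm m \<le> R\<close> assms(5)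
    by (intro mult_mono) auto
  finally have "R\<^sup>2 - (norm m)\<^sup>2 \<le> 2 * R * real (card I) * g j"
    by (simp add: mult_ac)
  then show ?thesis
    using j(1) by (auto simp: m_def g_def)
qed

lemma convex_hull_sphere_long_chord:
  fixes K :: "('a::euclidean_space \<times> 'b::euclidean_space) set"
  assumes z: "z \<in> convex hull K" and sphere: "\<forall>x\<in>K. norm (fst x) = R"
  obtains x y w where "x \<in> K" "y \<in> K" "0 \<le> w"
    "z + w *\<^sub>R (x - y) \<in> convex hull K" "z - w *\<^sub>R (x - y) \<in> convex hull K"
    "R\<^sup>2 - (norm (fst z))\<^sup>2 \<le> 2 * R * real (DIM('a \<times> 'b) + 1) * (w * norm (fst x - fst y))"
proof -
  obtain F u where F: "finite F" "F \<subseteq> K" "card F \<le> DIM('a \<times> 'b) + 1"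
    and u: "\<forall>x\<in>F. 0 \<le> u x" "sum u F = 1" "(\<Sum>x\<in>F. u x *\<^sub>R x) = z"
    using z by (auto simp: convex_hull_caratheodory)
  have "F \<noteq> {}" using u(2) by auto
  then obtain y where y: "y \<in> F" "\<And>x. x \<in> F \<Longrightarrow> u x \<le> u y"
    using finite_obtain_arg_max[OF F(1)] by blast
  have fst_z: "(\<Sum>x\<in>F. u x *\<^sub>R fst x) = fst z"
    using u(3) by (auto simp: fst_sum)
  have on_sphere: "\<forall>x\<in>F. norm (fst x) = R" using F(2) sphere by blast
  then obtain x where x: "x \<in> F"
    and deficit: "R\<^sup>2 - (norm (fst z))\<^sup>2 \<le> 2 * R * real (card F) * (u x * norm (fst x - fst y))"
    using convex_combination_sphere_far_point[OF F(1) u(1,2) on_sphere] y(1) on_sphere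
    unfolding fst_z by blast
  have "z + \<mu> *\<^sub>R (x - y) \<in> convex hull K" if "\<bar>\<mu>\<bar> \<le> u x" for \<mu>
    using convex_hull_transfer_weight[OF F(1) u(1,2) x y(1), of \<mu>] that y(2)[OF x] u(3)
      hull_mono[OF F(2), of convex] by auto
  from this[of "u x"] this[of "- u x"]
  have "z + u x *\<^sub>R (x - y) \<in> convex hull K" "z - u x *\<^sub>R (x - y) \<in> convex hull K"
    using u(1) x by auto
  moreover have "R\<^sup>2 - (norm (fst z))\<^sup>2 \<le> 2 * R * real (DIM('a \<times> 'b) + 1) * (u x * norm (fst x - fst y))"
  proof -
    have "0 \<le> R" using sphere F(2) x by force
    with F(3) u(1) x show ?thesis
      by (intro order_trans[OF deficit] mult_right_mono mult_left_mono) auto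
  qed
  ultimately show ?thesis
    using that[of x y "u x"] F(2) x y(1) u(1) by auto
qed

lemma interior_of_convex_hull_chord_segment:
  fixes K S :: "('a::euclidean_space \<times> 'b::euclidean_space) set"
  assumes "affine S" "K \<subseteq> S" "\<forall>x\<in>K. norm (fst x) = R"
    and z: "z \<in> top_of_set S interior_of (convex hull K)"
  obtains x y t where "x \<in> K" "y \<in> K" "0 \<le> t"
    "closed_segment (z - t *\<^sub>R (x - y)) (z + t *\<^sub>R (x - y)) \<subseteq> top_of_set S interior_of (convex hull K)"
    "R\<^sup>2 - (norm (fst z))\<^sup>2 \<le> 4 * R * real (DIM('a \<times> 'b) + 1) * (t * norm (fst x - fst y))"
proof -
  have "z \<in> convex hull K" using z interior_of_subset[of "top_of_set S" "convex hull K"] by blast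
  then obtain x y w where xy: "x \<in> K" "y \<in> K" "0 \<le> w"
    and chord: "z + w *\<^sub>R (x - y) \<in> convex hull K" "z - w *\<^sub>R (x - y) \<in> convex hull K"
    and bound: "R\<^sup>2 - (norm (fst z))\<^sup>2 \<le> 2 * R * real (DIM('a \<times> 'b) + 1) * (w * norm (fst x - fst y))"
    using convex_hull_sphere_long_chord assms(3) by blast
  have "convex hull K \<subseteq> S"
    using assms(1,2) by (intro hull_minimal affine_imp_convex)
  then have "closed_segment (z - (w / 2) *\<^sub>R (x - y)) (z + (w / 2) *\<^sub>R (x - y))
      \<subseteq> top_of_set S interior_of (convex hull K)"
    using closed_segment_subset_interior_of[OF assms(1) convex_convex_hull _ z chord] by simp
  then show ?thesis
    using that[of x y "w / 2"] xy bound by (simp add: algebra_simps)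
qed

lemma subspace_symm0: "subspace (symm0 :: (real^'n^'n) set)"
  unfolding subspace_def symm0_def
  by (auto simp: transpose_def vec_eq_iff trace_def sum.distrib sum_distrib_left[symmetric])

lemma subspace_Space: "subspace (Space :: ((real^'n) \<times> (real^'n^'n)) set)"
  using subspace_symm0 unfolding Space_def subspace_def by (auto simp: zero_prod_def)

lemma trace_outer_self: "trace (outer a a) = (norm (a::real^'n))\<^sup>2"
  by (simp add: trace_def outer_def power2_norm_eq_inner inner_vec_def)

lemma trace_scaleR: "trace (c *\<^sub>R (A::real^'n^'n)) = c * trace A"
  by (simp add: trace_def sum_distrib_left)

lemma Kset_memD:
  assumes "(a, V) \<in> Kset \<rho> q"
  shows "V \<in> symm0" "V = (1/\<rho>) *\<^sub>R outer a a - q *\<^sub>R mat 1"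
  using assms by (auto simp: Kset_def algebra_simps)

lemma Kset_norm:
  fixes x :: "(real^'n) \<times> (real^'n^'n)"
  assumes "x \<in> Kset \<rho> q" "\<rho> > 0"
  shows "norm (fst x) = sqrt (real CARD('n) * \<rho> * q)"
proof -
  obtain a V where x: "x = (a, V)" by (meson surj_pair)
  have "trace V = 0" using Kset_memD(1)[of a V] assms(1) by (simp add: x symm0_def)
  then have "(norm a)\<^sup>2 / \<rho> = q * real CARD('n)"
    using arg_cong[OF Kset_memD(2), of a V \<rho> q trace] assms(1)
    by (simp add: x trace_sub trace_scaleR trace_outer_self trace_I)
  then have "(norm a)\<^sup>2 = real CARD('n) * \<rho> * q" using assms(2) by (simp add: field_simps)
  then show ?thesis by (simp add: x real_sqrt_unique)
qed

lemma affine_Space: "affine (Space :: ((real^'n) \<times> (real^'n^'n)) set)"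
  using subspace_Space by (rule subspace_imp_affine)

lemma Kset_subset_Space: "Kset \<rho> q \<subseteq> (Space :: ((real^'n) \<times> (real^'n^'n)) set)"
  using Kset_memD(1) by (auto simp: Space_def)

definition Kchord_segment ::
    "real \<Rightarrow> real \<Rightarrow> real^'n \<Rightarrow> real^'n^'n \<Rightarrow> real^'n \<Rightarrow> real^'n^'n \<Rightarrow> bool" where
  "Kchord_segment \<rho> q m U mb Ub \<longleftrightarrow> Ub \<in> symm0 \<and>
     closed_segment (m - mb, U - Ub) (m + mb, U + Ub) \<subseteq> intKco \<rho> q \<and>
     (\<exists>a b t. norm a = sqrt (real CARD('n) * \<rho> * q) \<and>
              norm b = sqrt (real CARD('n) * \<rho> * q) \<and> a \<noteq> b \<and>
              (mb, Ub) = t *\<^sub>R (a - b, (1/\<rho>) *\<^sub>R outer a a - (1/\<rho>) *\<^sub>R outer b b))"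

lemma Kchord_segment_zero:
  fixes m :: "real^'n"
  assumes "\<rho> > 0" "q > 0" "(m, U) \<in> intKco \<rho> q"
  shows "Kchord_segment \<rho> q m U 0 0"
proof -
  define a where "a = sqrt (real CARD('n) * \<rho> * q) *\<^sub>R (axis undefined 1 :: real^'n)"
  have norm_a: "norm a = sqrt (real CARD('n) * \<rho> * q)" "norm (- a) = sqrt (real CARD('n) * \<rho> * q)"
    using assms(1,2) by (simp_all add: a_def)
  moreover have "a \<noteq> - a"
    using norm_a(1) assms(1,2) by (auto simp: eq_neg_iff_add_eq_0 simp flip: scaleR_2)
  ultimately show ?thesis
    using assms(3) subspace_0[OF subspace_symm0] unfolding Kchord_segment_def
    by (intro conjI exI[of _ a] exI[of _ "- a"] exI[of _ 0]) auto
qed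

lemma Kchord_segmentI:
  fixes a b :: "real^'n"
  assumes aA: "(a, A) \<in> Kset \<rho> q" and bB: "(b, B) \<in> Kset \<rho> q" and "a \<noteq> b" "\<rho> > 0"
    and seg: "closed_segment ((m, U) - t *\<^sub>R ((a, A) - (b, B))) ((m, U) + t *\<^sub>R ((a, A) - (b, B)))
      \<subseteq> intKco \<rho> q"
  shows "Kchord_segment \<rho> q m U (t *\<^sub>R (a - b)) (t *\<^sub>R (A - B))"
proof -
  have "A - B = (1/\<rho>) *\<^sub>R outer a a - (1/\<rho>) *\<^sub>R outer b b"
    using Kset_memD(2)[OF aA] Kset_memD(2)[OF bB] by simp
  then have "(t *\<^sub>R (a - b), t *\<^sub>R (A - B)) = t *\<^sub>R (a - b, (1/\<rho>) *\<^sub>R outer a a - (1/\<rho>) *\<^sub>R outer b b)"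
    by simp
  moreover have "t *\<^sub>R (A - B) \<in> symm0"
    using Kset_memD(1)[OF aA] Kset_memD(1)[OF bB] subspace_symm0
    by (intro subspace_scale subspace_diff)
  moreover have "norm a = sqrt (real CARD('n) * \<rho> * q)" "norm b = sqrt (real CARD('n) * \<rho> * q)"
    using Kset_norm[OF aA \<open>\<rho> > 0\<close>] Kset_norm[OF bB \<open>\<rho> > 0\<close>] by simp_all
  moreover have "closed_segment (m - t *\<^sub>R (a - b), U - t *\<^sub>R (A - B)) (m + t *\<^sub>R (a - b), U + t *\<^sub>R (A - B))
      \<subseteq> intKco \<rho> q"
    using seg by simp
  ultimately show ?thesis
    using \<open>a \<noteq> b\<close> unfolding Kchord_segment_def by blast
qed

lemma exists_Kchord_segment:
  fixes m :: "real^'n"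
  assumes \<rho>: "\<rho> > 0" and "q > 0" and mU: "(m, U) \<in> intKco \<rho> q"
  shows "\<exists>mb Ub. Kchord_segment \<rho> q m U mb Ub \<and>
    1 / (4 * real (DIM((real^'n) \<times> (real^'n^'n)) + 1)) / sqrt (real CARD('n) * \<rho> * q) *
      (real CARD('n) * \<rho> * q - (norm m)\<^sup>2) \<le> norm mb"
    (is "\<exists>mb Ub. _ \<and> ?C / ?R * (?R2 - _) \<le> _")
proof (cases "?R2 - (norm m)\<^sup>2 \<le> 0")
  case True
  have "0 \<le> ?C / ?R" using \<rho> \<open>q > 0\<close> by simp
  then have "?C / ?R * (?R2 - (norm m)\<^sup>2) \<le> 0"
    using True by (rule mult_nonneg_nonpos)
  then show ?thesis
    using Kchord_segment_zero[OF assms] by auto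
next
  case False
  have R: "?R > 0" "?R\<^sup>2 = ?R2" using \<rho> \<open>q > 0\<close> by simp_all
  have cancel: "1 / (4 * n) / r * (4 * r * n * x) = x" if "r > 0" "n > 0" for r n x :: real
    using that by simp
  have "norm (fst x) = ?R" if "x \<in> Kset \<rho> q" for x :: "(real^'n) \<times> (real^'n^'n)"
    using Kset_norm[OF that \<rho>] .
  then obtain x y t where xy: "x \<in> Kset \<rho> q" "y \<in> Kset \<rho> q" and "0 \<le> t"
    and seg: "closed_segment ((m, U) - t *\<^sub>R (x - y)) ((m, U) + t *\<^sub>R (x - y)) \<subseteq> intKco \<rho> q"
    and bound: "?R\<^sup>2 - (norm (fst (m, U)))\<^sup>2
      \<le> 4 * ?R * real (DIM((real^'n) \<times> (real^'n^'n)) + 1) * (t * norm (fst x - fst y))"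
    using interior_of_convex_hull_chord_segment[OF affine_Space Kset_subset_Space ballI mU[unfolded intKco_def]]
    unfolding intKco_def by blast
  obtain a A b B where ab: "x = (a, A)" "y = (b, B)" by (meson surj_pair)
  have aA: "(a, A) \<in> Kset \<rho> q" and bB: "(b, B) \<in> Kset \<rho> q" using xy by (simp_all add: ab)
  have "a \<noteq> b"
  proof
    assume "a = b"
    then have "?R\<^sup>2 - (norm m)\<^sup>2 \<le> 0" using bound by (simp add: ab)
    then show False using False R(2) by simp
  qed
  have chord: "Kchord_segment \<rho> q m U (t *\<^sub>R (a - b)) (t *\<^sub>R (A - B))"
    using Kchord_segmentI[OF aA bB \<open>a \<noteq> b\<close> \<rho>] seg by (simp add: ab)
  have "?C / ?R * (?R2 - (norm m)\<^sup>2)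
      \<le> ?C / ?R * (4 * ?R * real (DIM((real^'n) \<times> (real^'n^'n)) + 1) * (t * norm (a - b)))"
    using bound R by (intro mult_left_mono) (simp_all add: ab)
  also have "\<dots> = t * norm (a - b)"
    using R(1) by (intro cancel) (simp_all add: add_pos_nonneg)
  also have "\<dots> = norm (t *\<^sub>R (a - b))"
    using \<open>0 \<le> t\<close> by simp
  finally show ?thesis using chord by blast
qed

theorem lemma2p3:
  assumes "CARD('n) \<ge> 3"
  shows "\<exists>C>0. \<forall>(\<rho>::real) (q::real) (m::real^'n) (U::real^'n^'n).
           \<rho> > 0 \<longrightarrow> q > 0 \<longrightarrow> (m, U) \<in> intKco \<rho> q \<longrightarrow>
           (\<exists>mb Ub. Ub \<in> symm0 \<and>
              closed_segment (m - mb, U - Ub) (m + mb, U + Ub) \<subseteq> intKco \<rho> q \<and>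
              (\<exists>a b t. norm a = sqrt (real CARD('n) * \<rho> * q) \<and>
                       norm b = sqrt (real CARD('n) * \<rho> * q) \<and> a \<noteq> b \<and>
                       (mb, Ub) = t *\<^sub>R (a - b, (1/\<rho>) *\<^sub>R outer a a - (1/\<rho>) *\<^sub>R outer b b)) \<and>
              norm mb \<ge> C / sqrt (real CARD('n) * \<rho> * q) *
                         (real CARD('n) * \<rho> * q - (norm m)\<^sup>2))"
  using exists_Kchord_segment unfolding Kchord_segment_def
  by (intro exI[of _ "1 / (4 * real (DIM((real^'n) \<times> (real^'n^'n)) + 1))"] conjI allI impI)
    (simp add: add_pos_nonneg, blast)

end
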